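(* Let $N\geq 2$, $1\le k\le N$, $D>0$, and let $C_F(N)$ be a constant such that $\lambda(F)\leq C_F(N)\sqrt{\delta(F)}$ for every set of finite perimeter $F\subseteq\mathbb R^N$ with $0<|F|<\infty$. Let $E\subseteq\mathbb R^N$ be a set of finite perimeter with $|E|=1$, $\mathrm{bar}(E)=0$, $\operatorname{diam}(E)<D$, and symmetric with respect to each coordinate hyperplane $\{x_i=0\}$ for $N-k+1<i\le N$. Set $\varepsilon=\big|\tfrac12-|E\cap\{x_1>0\}|\big|$. Then \[ \varepsilon\leq C_1\,D\,\sqrt{\delta(E)},\qquad\text{where } C_1=C_F(N)\Big(\frac{\omega_{N-1}}{\omega_N^{\frac{N-1}{N}}}+\frac{\omega_N^{1/N}}{2}\Big). \]
   Context: $\omega_j$ is the volume of the unit ball in $\mathbb R^j$. For a set of finite perimeter $E\subseteq\mathbb R^N$, $P(E)$ is its perimeter, $|E|$ its Lebesgue measure, $B(m)$ the ball centered at the origin of volume $m$; $\delta(E)=\frac{P(E)-P(B(m))}{P(B(m))}$ with $m=|E|$; $\lambda(E)=\inf_{x\in\mathbb R^N}\frac{|E\Delta(x+B(m))|}{|E|}$ (Fraenkel asymmetry); $\mathrm{bar}(E)=\frac1{|E|}\int_Ex\,dx$. Diameter is in the measure-theoretic sense (supremum of distances between Lebesgue points of $E$). Symmetry with respect to a hyperplane $\Pi$ means $R_\Pi(E)=E$ for the reflection $R_\Pi$ across $\Pi$. *)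

theory Defs
  imports "HOL-Analysis.Analysis"
begin

text \<open>Ambient space R^N is real^'n, N = CARD('n); the (linear) order on the index type
  numbers the coordinates 1..N.\<close>

definition coord_pos :: "'n::{finite,linorder} \<Rightarrow> nat" where
  "coord_pos i = card {j. j < i} + 1"

definition C1c_fields :: "(real^'n \<Rightarrow> real^'n) set" where
  "C1c_fields = {\<phi>. (\<exists>D. (\<forall>x. (\<phi> has_derivative D x) (at x)) \<and> (\<forall>v. continuous_on UNIV (\<lambda>x. D x v)))
                   \<and> bounded {x. \<phi> x \<noteq> 0}}"

definition divergence :: "(real^'n \<Rightarrow> real^'n) \<Rightarrow> real^'n \<Rightarrow> real" where
  "divergence \<phi> x = (\<Sum>i\<in>UNIV. (frechet_derivative \<phi> (at x) (axis i 1)) $ i)"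

definition perimeter_e :: "(real^'n) set \<Rightarrow> ereal" where
  "perimeter_e E = (SUP \<phi>\<in>{\<phi>\<in>C1c_fields. \<forall>x. norm (\<phi> x) \<le> 1}. ereal (integral E (divergence \<phi>)))"

definition finite_perimeter :: "(real^'n) set \<Rightarrow> bool" where
  "finite_perimeter E \<longleftrightarrow> E \<in> sets lebesgue \<and> perimeter_e E < \<infinity>"

definition perimeter :: "(real^'n) set \<Rightarrow> real" where
  "perimeter E = real_of_ereal (perimeter_e E)"

definition vol_ball :: "real \<Rightarrow> (real^'n) set" where
  "vol_ball m = ball 0 ((m / unit_ball_vol (real CARD('n))) powr (1 / real CARD('n)))"

definition deficit :: "(real^'n) set \<Rightarrow> real" where
  "deficit E = (let m = measure lebesgue E in
     (perimeter E - perimeter (vol_ball m :: (real^'n) set)) / perimeter (vol_ball m :: (real^'n) set))"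

definition fraenkel :: "(real^'n) set \<Rightarrow> real" where
  "fraenkel E = (let m = measure lebesgue E in
     (INF x. measure lebesgue ((E - (+) x ` vol_ball m) \<union> ((+) x ` vol_ball m - E)) / m))"

definition barycenter :: "(real^'n) set \<Rightarrow> real^'n" where
  "barycenter E = (1 / measure lebesgue E) *\<^sub>R integral E (\<lambda>x. x)"

definition lebesgue_point :: "(real^'n) set \<Rightarrow> real^'n \<Rightarrow> bool" where
  "lebesgue_point E x \<longleftrightarrow>
     ((\<lambda>r. measure lebesgue (E \<inter> ball x r) / measure lebesgue (ball x r)) \<longlongrightarrow> 1) (at_right 0)"

definition mt_diam :: "(real^'n) set \<Rightarrow> ereal" where
  "mt_diam E = (SUP p\<in>{(x,y). lebesgue_point E x \<and> lebesgue_point E y}. ereal (dist (fst p) (snd p)))"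

definition reflect_coord :: "'n \<Rightarrow> real^'n \<Rightarrow> real^'n" where
  "reflect_coord i x = (\<chi> j. if j = i then - (x $ j) else x $ j)"

end

theory Submission
  imports Defs
begin

(*
  Let B be a ball of volume one with centre z, and let a = |E - B| = |B - E|, so that the
  symmetric difference of E and B has measure 2a. A set of volume one and diameter below D
  cannot be contained in a ball of radius below the radius r of B, so r <= D and the claim is
  trivial when a >= 1/2. When a < 1/2, the vanishing barycentre pins down z: for a unit vector l,
  the first moment of B is (l.z)|B| and that of E is zero, so (l.z)|B| is the integral of l.x
  over B - E minus that over E - B. If M is the supremum of l.x on E, then l.z <= M (otherwise
  the half of B beyond level M would lie in B - E), so l.x <= M + r on B - E, whereas
  l.x >= M - D on E - B; hence |z_1| <= a (D + r). The half-space {x_1 > 0} splits B into parts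
  whose volumes differ from 1/2 by at most the volume of a slab of width |z_1|, which is at most
  omega_(N-1) r^(N-1) |z_1|, and E and B differ on that half-space by at most a. Minimising over
  z bounds the deviation by a multiple of the Fraenkel asymmetry. Since the diameter is only
  measure-theoretic, all this is applied to the Lebesgue points of E, which carry its whole
  measure by the Lebesgue density theorem.
*)

section \<open>First moments and half-spaces of balls\<close>

lemma integrable_on_bounded_continuous:
  fixes f :: "'a::euclidean_space \<Rightarrow> 'b::euclidean_space"
  assumes "S \<in> sets lebesgue" "bounded S" "continuous_on UNIV f"
  shows "f integrable_on S"
proof -
  obtain a b where "S \<subseteq> cbox a b"
    using \<open>bounded S\<close> bounded_subset_cbox_symmetric by metis
  moreover have "f absolutely_integrable_on cbox a b"
    using assms(3) by (intro absolutely_integrable_continuous) (auto intro: continuous_on_subset)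
  ultimately show ?thesis
    using set_integrable_subset[of lebesgue "cbox a b" f S] assms(1) absolutely_integrable_on_def
    by blast
qed

lemma has_integral_const_lmeasurable:
  "S \<in> lmeasurable \<Longrightarrow> ((\<lambda>_. c) has_integral c * measure lebesgue S) S"
proof -
  assume "S \<in> lmeasurable"
  then have "((\<lambda>_. 1::real) has_integral measure lebesgue S) S"
    by (metis lmeasure_integral integrable_integral integrable_on_const)
  from has_integral_mult_right[OF this, of c] show ?thesis
    by simp
qed

lemma has_integral_point_reflection:
  fixes f :: "'a::euclidean_space \<Rightarrow> 'b::banach"
  assumes "bounded S" and S: "\<And>x. x \<in> S \<Longrightarrow> 2 *\<^sub>R z - x \<in> S" and f: "(f has_integral i) S"
  shows "((\<lambda>x. f (2 *\<^sub>R z - x)) has_integral i) S"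
proof -
  obtain a where a: "(\<lambda>x. x - z) ` S \<subseteq> cbox (-a) a"
    using bounded_subset_cbox_symmetric bounded_translation_minus[OF \<open>bounded S\<close>] by metis
  define Q where "Q = cbox (z - a) (z + a)"
  have "S \<subseteq> Q"
    using a by (force simp: Q_def mem_box algebra_simps)
  have Q: "2 *\<^sub>R z - x \<in> Q" if "x \<in> Q" for x
    using that by (auto simp: Q_def mem_box inner_diff_left inner_add_left)
  have "(\<lambda>x. 2 *\<^sub>R z - x) ` Q = Q"
    using Q by (force intro: image_eqI[where x="2 *\<^sub>R z - x" for x])
  define g where "g = (\<lambda>x. if x \<in> S then f x else 0)"
  have "(g has_integral i) Q"
    using f \<open>S \<subseteq> Q\<close> by (simp add: g_def)
  from has_integral_affinity[OF this[unfolded Q_def], of "-1" "2 *\<^sub>R z"]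
  have "((\<lambda>x. g (2 *\<^sub>R z - x)) has_integral i) Q"
    using \<open>(\<lambda>x. 2 *\<^sub>R z - x) ` Q = Q\<close> by (simp add: Q_def)
  moreover have "g (2 *\<^sub>R z - x) = (if x \<in> S then f (2 *\<^sub>R z - x) else 0)" for x
    using S[of x] S[of "2 *\<^sub>R z - x"] by (auto simp: g_def)
  ultimately show ?thesis
    using \<open>S \<subseteq> Q\<close> by simp
qed

lemma ball_point_reflection:
  fixes x z :: "'a::real_normed_vector"
  assumes "x \<in> ball z r"
  shows "2 *\<^sub>R z - x \<in> ball z r"
proof -
  have reflect: "z - (2 *\<^sub>R z - x) = x - z"
    by (simp add: scaleR_2 algebra_simps)
  show ?thesis
    using assms unfolding mem_ball dist_norm reflect by (simp add: norm_minus_commute)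
qed

lemma integral_inner_ball:
  fixes l z :: "'a::euclidean_space"
  shows "integral (ball z r) (\<lambda>y. l \<bullet> y) = (l \<bullet> z) * measure lebesgue (ball z r)"
proof -
  let ?I = "integral (ball z r) (\<lambda>y. l \<bullet> y)" and ?m = "measure lebesgue (ball z r)"
  have int: "(\<lambda>y. l \<bullet> y) integrable_on ball z r"
    by (rule integrable_on_bounded_continuous) (simp_all add: continuous_on_inner)
  then have "((\<lambda>y. l \<bullet> (2 *\<^sub>R z - y)) has_integral ?I) (ball z r)"
    by (intro has_integral_point_reflection ball_point_reflection) auto
  moreover have "((\<lambda>y. l \<bullet> (2 *\<^sub>R z - y)) has_integral 2 * (l \<bullet> z) * ?m - ?I) (ball z r)"
  proof -
    have "((\<lambda>y. 2 * (l \<bullet> z) - l \<bullet> y) has_integral 2 * (l \<bullet> z) * ?m - ?I) (ball z r)"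
      by (intro has_integral_diff has_integral_const_lmeasurable integrable_integral int) simp
    then show ?thesis
      by (simp add: inner_diff_right)
  qed
  ultimately have "?I = 2 * (l \<bullet> z) * ?m - ?I"
    by (rule has_integral_unique)
  then show ?thesis
    by linarith
qed

lemma measure_le_Un_sum:
  assumes "A \<subseteq> B \<union> C" "A \<in> sets M" "B \<in> fmeasurable M" "C \<in> fmeasurable M"
  shows "measure M A \<le> measure M B + measure M C"
proof -
  have "measure M A \<le> measure M (B \<union> C)"
    using assms by (intro measure_mono_fmeasurable) auto
  also have "\<dots> \<le> measure M B + measure M C"
    using assms by (intro measure_Un_le) auto
  finally show ?thesis .
qed

lemma measure_Diff_eq_if_measure_eq:
  assumes "A \<in> fmeasurable M" "B \<in> fmeasurable M" "measure M A = measure M B"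
  shows "measure M (A - B) = measure M (B - A)"
proof -
  have "measure M (X - Y) = measure M X - measure M (X \<inter> Y)"
    if "X \<in> fmeasurable M" "Y \<in> fmeasurable M" for X Y
  proof -
    have "X - Y = X - (X \<inter> Y)"
      by blast
    then show ?thesis
      using that by (simp add: measurable_measure_Diff fmeasurableD)
  qed
  then show ?thesis
    using assms by (simp add: Int_commute)
qed

lemma abs_measure_Int_diff_le:
  assumes "A \<in> fmeasurable M" "B \<in> fmeasurable M" "H \<in> sets M" "measure M A = measure M B"
  shows "\<bar>measure M (A \<inter> H) - measure M (B \<inter> H)\<bar> \<le> measure M (A - B)"
proof -
  have "measure M (A \<inter> H) \<le> measure M (B \<inter> H) + measure M (A - B)"
    using assms by (intro measure_le_Un_sum) (auto intro: fmeasurable_Int_fmeasurable)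
  moreover have "measure M (B \<inter> H) \<le> measure M (A \<inter> H) + measure M (B - A)"
    using assms by (intro measure_le_Un_sum) (auto intro: fmeasurable_Int_fmeasurable)
  ultimately show ?thesis
    using measure_Diff_eq_if_measure_eq[OF assms(1,2,4)] by (simp add: abs_le_iff)
qed

lemma bounded_if_dist_less:
  assumes "\<And>p q. p \<in> S \<Longrightarrow> q \<in> S \<Longrightarrow> dist p q < D"
  shows "bounded S"
  unfolding bounded_def using assms by (metis less_imp_le)

lemma measure_ball_Int_halfspace:
  fixes l z :: "'a::euclidean_space"
  assumes "l \<noteq> 0"
  shows "measure lebesgue (ball z r \<inter> {y. l \<bullet> z < l \<bullet> y}) = measure lebesgue (ball z r) / 2"
proof -
  define P where "P = ball z r \<inter> {y. l \<bullet> z < l \<bullet> y}"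
  define P' where "P' = ball z r \<inter> {y. l \<bullet> y < l \<bullet> z}"
  have P: "P \<in> lmeasurable" and P': "P' \<in> lmeasurable"
    unfolding P_def P'_def
    by (auto intro!: lmeasurable_open bounded_Int open_Int open_halfspace_gt open_halfspace_lt)
  have "P' = (\<lambda>x. (-1) *\<^sub>R x + 2 *\<^sub>R z) ` P"
  proof -
    have "l \<bullet> (2 *\<^sub>R z - y) = 2 * (l \<bullet> z) - l \<bullet> y" for y
      by (simp add: inner_diff_right)
    then show ?thesis
      unfolding P_def P'_def
      by (force intro: image_eqI[where x="2 *\<^sub>R z - y" for y] ball_point_reflection)
  qed
  then have "measure lebesgue P' = measure lebesgue P"
    using measure_lebesgue_affine[of "-1" "2 *\<^sub>R z" P] by simp
  moreover have "measure lebesgue (P \<union> P') = measure lebesgue P + measure lebesgue P'"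
  proof -
    have "P \<inter> P' = {}"
      by (auto simp: P_def P'_def)
    then show ?thesis
      using measure_Un3[OF P P'] by simp
  qed
  moreover have "measure lebesgue (P \<union> P') = measure lebesgue (ball z r)"
    using assms negligible_hyperplane[of l "l \<bullet> z"]
    by (intro measure_negligible_symdiff lmeasurable_ball)
       (auto simp: P_def P'_def elim!: negligible_subset)
  ultimately show ?thesis
    by (simp add: P_def)
qed

section \<open>Slabs in balls\<close>

lemma emeasure_PiM_cylinder:
  fixes A :: "'a set"
  assumes "finite A" "e \<notin> A" "r > 0" "\<alpha> \<le> \<beta>"
  shows "emeasure (Pi\<^sub>M (insert e A) (\<lambda>_. lborel))
           ({f. \<alpha> < f e \<and> f e \<le> \<beta> \<and> sqrt (\<Sum>i\<in>A. (f i)\<^sup>2) \<le> r}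
              \<inter> space (Pi\<^sub>M (insert e A) (\<lambda>_. lborel)))
         = ennreal ((\<beta> - \<alpha>) * (unit_ball_vol (real (card A)) * r ^ card A))"
proof -
  interpret product_sigma_finite "\<lambda>_. lborel"
    by standard
  let ?M = "Pi\<^sub>M (insert e A) (\<lambda>_. lborel)" and ?v = "unit_ball_vol (real (card A)) * r ^ card A"
  let ?G = "{f. sqrt (\<Sum>i\<in>A. (f i)\<^sup>2) \<le> r} \<inter> space (Pi\<^sub>M A (\<lambda>_. lborel))"
  let ?F = "{f. \<alpha> < f e \<and> f e \<le> \<beta> \<and> sqrt (\<Sum>i\<in>A. (f i)\<^sup>2) \<le> r} \<inter> space ?M"
  have "emeasure ?M ?F = (\<integral>\<^sup>+ y. \<integral>\<^sup>+ x. indicator ?F (x(e := y)) \<partial>Pi\<^sub>M A (\<lambda>_. lborel) \<partial>lborel)"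
    using assms by (subst product_nn_integral_insert_rev[symmetric]) auto
  also have "\<dots> = (\<integral>\<^sup>+ y. \<integral>\<^sup>+ x. indicator {\<alpha><..\<beta>} y * indicator ?G x
                          \<partial>Pi\<^sub>M A (\<lambda>_. lborel) \<partial>lborel)"
  proof (intro nn_integral_cong)
    fix y :: real and x :: "'a \<Rightarrow> real"
    assume "x \<in> space (Pi\<^sub>M A (\<lambda>_. lborel))"
    moreover have "(\<Sum>i\<in>A. ((x(e := y)) i)\<^sup>2) = (\<Sum>i\<in>A. (x i)\<^sup>2)"
      using assms by (intro sum.cong) auto
    ultimately show "indicator ?F (x(e := y)) = indicator {\<alpha><..\<beta>} y * (indicator ?G x :: ennreal)"
      by (auto simp: indicator_def PiE_def space_PiM extensional_def)
  qed
  also have "\<dots> = (\<integral>\<^sup>+ y. ennreal ?v * indicator {\<alpha><..\<beta>} y \<partial>lborel)"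
    using assms by (simp add: nn_integral_cmult emeasure_cball_aux mult.commute)
  also have "\<dots> = ennreal ((\<beta> - \<alpha>) * ?v)"
    using assms by (simp add: nn_integral_multc ennreal_mult'[symmetric] mult.commute)
  finally show ?thesis .
qed

lemma measure_ball_0_Int_slab_le:
  fixes e :: "'a::euclidean_space"
  assumes e: "e \<in> Basis" and "r > 0" "\<alpha> \<le> \<beta>"
  shows "measure lebesgue (ball 0 r \<inter> {y. \<alpha> < y \<bullet> e \<and> y \<bullet> e \<le> \<beta>})
           \<le> (\<beta> - \<alpha>) * (unit_ball_vol (real (DIM('a) - 1)) * r ^ (DIM('a) - 1))"
proof -
  let ?S = "ball 0 r \<inter> {y. \<alpha> < y \<bullet> e \<and> y \<bullet> e \<le> \<beta>}"
  let ?M = "Pi\<^sub>M (Basis::'a set) (\<lambda>_. lborel)"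
  let ?A = "Basis - {e}"
  let ?coords = "\<lambda>f. \<Sum>b\<in>Basis. f b *\<^sub>R b :: 'a"
  let ?C = "{f. \<alpha> < f e \<and> f e \<le> \<beta> \<and> sqrt (\<Sum>i\<in>?A. (f i)\<^sup>2) \<le> r} \<inter> space ?M"
  have S: "?S \<in> sets borel"
    by measurable
  \<comment> \<open>In coordinates the slab lies in a cylinder over an (N-1)-ball of radius r.\<close>
  have "?coords -` ?S \<inter> space ?M \<subseteq> ?C"
  proof
    fix f
    assume f: "f \<in> ?coords -` ?S \<inter> space ?M"
    have coord: "?coords f \<bullet> e = f e"
      using e by (simp add: inner_sum_left inner_Basis if_distrib cong: if_cong)
    have "sqrt (\<Sum>b\<in>Basis. (f b)\<^sup>2) < r"
      using f
      by (simp add: euclidean_dist_l2[of 0, simplified] L2_set_def inner_sum_left inner_Basis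
          if_distrib cong: if_cong)
    moreover have "sqrt (\<Sum>i\<in>?A. (f i)\<^sup>2) \<le> sqrt (\<Sum>b\<in>Basis. (f b)\<^sup>2)"
      by (intro real_sqrt_le_mono sum_mono2) auto
    ultimately have "sqrt (\<Sum>i\<in>?A. (f i)\<^sup>2) \<le> r"
      by linarith
    then show "f \<in> ?C"
      using f coord by auto
  qed
  then have "emeasure lborel ?S \<le> emeasure ?M ?C"
    using S e by (subst lborel_eq) (auto simp: emeasure_distr intro!: emeasure_mono)
  also have "\<dots> = ennreal ((\<beta> - \<alpha>) * (unit_ball_vol (real (DIM('a) - 1)) * r ^ (DIM('a) - 1)))"
    using emeasure_PiM_cylinder[of ?A e r \<alpha> \<beta>] assms by (simp add: insert_absorb)
  finally show ?thesis
    using S assms by (simp add: measure_def enn2real_leI)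
qed

lemma measure_ball_Int_slab_le:
  fixes e z :: "'a::euclidean_space"
  assumes "e \<in> Basis" "r > 0" "\<alpha> \<le> \<beta>"
  shows "measure lebesgue (ball z r \<inter> {y. \<alpha> < y \<bullet> e \<and> y \<bullet> e \<le> \<beta>})
           \<le> (\<beta> - \<alpha>) * (unit_ball_vol (real (DIM('a) - 1)) * r ^ (DIM('a) - 1))"
proof -
  let ?c = "unit_ball_vol (real (DIM('a) - 1)) * r ^ (DIM('a) - 1)"
  let ?T = "ball 0 r \<inter> {y. \<alpha> - z \<bullet> e < y \<bullet> e \<and> y \<bullet> e \<le> \<beta> - z \<bullet> e}"
  have "ball z r \<inter> {y. \<alpha> < y \<bullet> e \<and> y \<bullet> e \<le> \<beta>} = (+) z ` ?T"
  proof (intro equalityI subsetI)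
    fix y
    assume "y \<in> ball z r \<inter> {y. \<alpha> < y \<bullet> e \<and> y \<bullet> e \<le> \<beta>}"
    then have "y - z \<in> ?T"
      by (simp add: dist_norm norm_minus_commute inner_diff_left)
    then show "y \<in> (+) z ` ?T"
      by (rule image_eqI[rotated]) simp
  qed (auto simp: dist_norm inner_add_left)
  then have "measure lebesgue (ball z r \<inter> {y. \<alpha> < y \<bullet> e \<and> y \<bullet> e \<le> \<beta>}) = measure lebesgue ?T"
    by (simp add: measure_translation)
  also have "\<dots> \<le> ((\<beta> - z \<bullet> e) - (\<alpha> - z \<bullet> e)) * ?c"
    using assms by (intro measure_ball_0_Int_slab_le) auto
  finally show ?thesis
    by simp
qed

lemma measure_ball_Int_halfspace_deviation:
  fixes e z :: "'a::euclidean_space"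
  assumes e: "e \<in> Basis" and r: "r > 0"
  shows "\<bar>measure lebesgue (ball z r \<inter> {y. 0 < e \<bullet> y}) - measure lebesgue (ball z r) / 2\<bar>
           \<le> \<bar>z \<bullet> e\<bar> * (unit_ball_vol (real (DIM('a) - 1)) * r ^ (DIM('a) - 1))"
proof -
  define c where "c = unit_ball_vol (real (DIM('a) - 1)) * r ^ (DIM('a) - 1)"
  define B where "B = ball z r"
  define slab where "slab \<alpha> \<beta> = B \<inter> {y. \<alpha> < y \<bullet> e \<and> y \<bullet> e \<le> \<beta>}" for \<alpha> \<beta>
  define H where "H = B \<inter> {y. 0 < e \<bullet> y}"
  define P where "P = B \<inter> {y. e \<bullet> z < e \<bullet> y}"
  have lm: "X \<in> lmeasurable" if "X \<subseteq> B" "X \<in> sets borel" for X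
    using that by (intro fmeasurableI2[OF lmeasurable_ball]) (auto simp: B_def)
  have slab: "slab \<alpha> \<beta> \<in> lmeasurable" for \<alpha> \<beta>
    by (rule lm) (auto simp: slab_def B_def)
  have H: "H \<in> lmeasurable" and P: "P \<in> lmeasurable"
    by (rule lm; auto simp: H_def P_def B_def)+
  have "e \<noteq> 0"
    using e nonzero_Basis by blast
  then have mP: "measure lebesgue P = measure lebesgue B / 2"
    unfolding P_def B_def by (rule measure_ball_Int_halfspace)
  have slab_le: "measure lebesgue (slab \<alpha> \<beta>) \<le> (\<beta> - \<alpha>) * c" if "\<alpha> \<le> \<beta>" for \<alpha> \<beta>
    unfolding slab_def B_def c_def using e r that by (rule measure_ball_Int_slab_le)
  show ?thesis
  proof (cases "0 \<le> z \<bullet> e")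
    case True
    have "measure lebesgue P \<le> measure lebesgue H"
      using True H P by (intro measure_mono_fmeasurable) (auto simp: P_def H_def inner_commute)
    moreover have "measure lebesgue H \<le> measure lebesgue P + measure lebesgue (slab 0 (z \<bullet> e))"
      using H P slab by (intro measure_le_Un_sum) (auto simp: P_def H_def slab_def inner_commute)
    ultimately show ?thesis
      using slab_le[of 0 "z \<bullet> e"] True mP by (simp add: H_def B_def c_def abs_le_iff)
  next
    case False
    have "measure lebesgue H \<le> measure lebesgue P"
      using False H P by (intro measure_mono_fmeasurable) (auto simp: P_def H_def inner_commute)
    moreover have "measure lebesgue P \<le> measure lebesgue H + measure lebesgue (slab (z \<bullet> e) 0)"
      using H P slab by (intro measure_le_Un_sum) (auto simp: P_def H_def slab_def inner_commute)
    ultimately show ?thesis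
      using slab_le[of "z \<bullet> e" 0] False mP by (simp add: H_def B_def c_def abs_le_iff)
  qed
qed

lemma measure_Diff_ball_ge_if_center_above:
  fixes E :: "'a::euclidean_space set"
  assumes "E \<in> sets lebesgue" "l \<noteq> 0" and below: "\<And>x. x \<in> E \<Longrightarrow> l \<bullet> x \<le> M" and "M < l \<bullet> z"
  shows "measure lebesgue (ball z r) / 2 \<le> measure lebesgue (ball z r - E)"
proof -
  have "ball z r \<inter> {y. l \<bullet> z < l \<bullet> y} \<subseteq> ball z r - E"
    using below \<open>M < l \<bullet> z\<close> by fastforce
  then have "measure lebesgue (ball z r \<inter> {y. l \<bullet> z < l \<bullet> y}) \<le> measure lebesgue (ball z r - E)"
    using assms(1)
    by (intro measure_mono_fmeasurable fmeasurableI2[OF lmeasurable_ball]) auto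
  then show ?thesis
    using measure_ball_Int_halfspace[OF \<open>l \<noteq> 0\<close>] by simp
qed

section \<open>Balls close to a set of small diameter\<close>

lemma inner_diff_le_dist:
  fixes l p q :: "'a::real_inner"
  assumes "norm l \<le> 1"
  shows "l \<bullet> p - l \<bullet> q \<le> dist p q"
proof -
  have "l \<bullet> p - l \<bullet> q = l \<bullet> (p - q)"
    by (simp add: inner_diff_right)
  also have "\<dots> \<le> norm l * norm (p - q)"
    by (rule norm_cauchy_schwarz)
  also have "\<dots> \<le> norm (p - q)"
    using assms by (rule mult_left_le_one_le[OF norm_ge_zero norm_ge_zero])
  finally show ?thesis
    by (simp add: dist_norm)
qed

lemma inner_band_if_dist_less:
  fixes E :: "'a::real_inner set"
  assumes "E \<noteq> {}" and diam: "\<And>p q. p \<in> E \<Longrightarrow> q \<in> E \<Longrightarrow> dist p q < D" and "norm l \<le> 1"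
  obtains M where "\<And>x. x \<in> E \<Longrightarrow> l \<bullet> x \<le> M" "\<And>x. x \<in> E \<Longrightarrow> M - D \<le> l \<bullet> x"
proof
  let ?M = "Sup ((\<lambda>x. l \<bullet> x) ` E)"
  have spread: "l \<bullet> x \<le> l \<bullet> q + D" if "x \<in> E" "q \<in> E" for x q
    using inner_diff_le_dist[OF \<open>norm l \<le> 1\<close>, of x q] diam[OF that] by linarith
  obtain q where "q \<in> E"
    using \<open>E \<noteq> {}\<close> by blast
  then have "bdd_above ((\<lambda>x. l \<bullet> x) ` E)"
    using spread by (intro bdd_aboveI2[of _ _ "l \<bullet> q + D"])
  then show "l \<bullet> x \<le> ?M" if "x \<in> E" for x
    using that by (intro cSup_upper) auto
  have "?M \<le> l \<bullet> x + D" if "x \<in> E" for x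
    using \<open>E \<noteq> {}\<close> spread[OF _ that] by (intro cSup_least) auto
  then show "?M - D \<le> l \<bullet> x" if "x \<in> E" for x
    using that by fastforce
qed

lemma inner_center_ball_eq_integral_Diff:
  fixes E :: "'a::euclidean_space set"
  assumes E: "E \<in> lmeasurable" "bounded E" and moment: "integral E (\<lambda>x. l \<bullet> x) = 0"
  shows "(l \<bullet> z) * measure lebesgue (ball z r)
           = integral (ball z r - E) (\<lambda>x. l \<bullet> x) - integral (E - ball z r) (\<lambda>x. l \<bullet> x)"
proof -
  have int: "(\<lambda>x. l \<bullet> x) integrable_on X" if "X \<in> lmeasurable" "X \<subseteq> ball z r \<union> E" for X
    using that bounded_subset[of "ball z r \<union> E"] E
    by (intro integrable_on_bounded_continuous) (auto simp: continuous_on_inner)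
  have split: "integral X (\<lambda>x. l \<bullet> x)
                 = integral (X \<inter> Y) (\<lambda>x. l \<bullet> x) + integral (X - Y) (\<lambda>x. l \<bullet> x)"
    if "X \<in> lmeasurable" "Y \<in> lmeasurable" "X \<subseteq> ball z r \<union> E" for X Y
  proof -
    have "(X \<inter> Y) \<inter> (X - Y) = {}" "(X \<inter> Y) \<union> (X - Y) = X"
      by blast+
    then show ?thesis
      using that integral_Un[OF int int, of "X \<inter> Y" "X - Y"] by auto
  qed
  show ?thesis
    using split[OF lmeasurable_ball[of z r] E(1) Un_upper1]
      split[OF E(1) lmeasurable_ball[of z r] Un_upper2] moment
    by (simp add: integral_inner_ball Int_commute)
qed

lemma inner_center_le_measure_Diff_ball:
  fixes E :: "'a::euclidean_space set"
  assumes E: "E \<in> lmeasurable" and diam: "\<And>p q. p \<in> E \<Longrightarrow> q \<in> E \<Longrightarrow> dist p q < D"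
    and moment: "integral E (\<lambda>x. l \<bullet> x) = 0" and l: "norm l = 1"
    and vol: "measure lebesgue E = measure lebesgue (ball z r)"
    and small: "measure lebesgue (E - ball z r) < measure lebesgue (ball z r) / 2"
  shows "(l \<bullet> z) * measure lebesgue (ball z r) \<le> measure lebesgue (E - ball z r) * (D + r)"
proof -
  define a where "a = measure lebesgue (E - ball z r)"
  have diffs: "ball z r - E \<in> lmeasurable" "E - ball z r \<in> lmeasurable"
    using E by auto
  have Ba: "measure lebesgue (ball z r - E) = a"
    using measure_Diff_eq_if_measure_eq[OF E lmeasurable_ball] vol by (simp add: a_def)
  have "E \<noteq> {}" "norm l \<le> 1"
    using small vol l by auto
  obtain M where below: "\<And>x. x \<in> E \<Longrightarrow> l \<bullet> x \<le> M" and above: "\<And>x. x \<in> E \<Longrightarrow> M - D \<le> l \<bullet> x"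
    using inner_band_if_dist_less[OF \<open>E \<noteq> {}\<close> diam \<open>norm l \<le> 1\<close>] by blast
  have "l \<bullet> z \<le> M"
  proof (rule ccontr)
    assume "\<not> l \<bullet> z \<le> M"
    then have "measure lebesgue (ball z r) / 2 \<le> measure lebesgue (ball z r - E)"
      using E l below by (intro measure_Diff_ball_ge_if_center_above[of _ l M]) auto
    then show False
      using small Ba by (simp add: a_def)
  qed
  have int: "(\<lambda>x. l \<bullet> x) integrable_on X" if "X \<in> lmeasurable" "X \<subseteq> ball z r \<union> E" for X
    using that bounded_subset[of "ball z r \<union> E"] bounded_if_dist_less[OF diam]
    by (intro integrable_on_bounded_continuous) (auto simp: continuous_on_inner)
  have "integral (ball z r - E) (\<lambda>x. l \<bullet> x) \<le> integral (ball z r - E) (\<lambda>_. M + r)"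
  proof (rule integral_le)
    show "l \<bullet> x \<le> M + r" if "x \<in> ball z r - E" for x
      using that inner_diff_le_dist[of l x z] l \<open>l \<bullet> z \<le> M\<close> by (simp add: dist_commute)
  qed (use diffs in \<open>auto intro: int integrable_on_const\<close>)
  moreover have "integral (E - ball z r) (\<lambda>_. M - D) \<le> integral (E - ball z r) (\<lambda>x. l \<bullet> x)"
    using above diffs by (intro integral_le int integrable_on_const) auto
  ultimately show ?thesis
    using inner_center_ball_eq_integral_Diff[OF E bounded_if_dist_less[OF diam] moment, of z r]
      integral_unique[OF has_integral_const_lmeasurable[OF diffs(1)]]
      integral_unique[OF has_integral_const_lmeasurable[OF diffs(2)]] Ba
    by (simp add: a_def algebra_simps)
qed

lemma abs_inner_center_le_measure_Diff_ball:
  fixes E :: "'a::euclidean_space set"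
  assumes E: "E \<in> lmeasurable" and diam: "\<And>p q. p \<in> E \<Longrightarrow> q \<in> E \<Longrightarrow> dist p q < D"
    and bary: "integral E (\<lambda>x. x) = 0" and l: "norm l = 1"
    and vol: "measure lebesgue E = measure lebesgue (ball z r)"
    and small: "measure lebesgue (E - ball z r) < measure lebesgue (ball z r) / 2"
  shows "\<bar>l \<bullet> z\<bar> * measure lebesgue (ball z r) \<le> measure lebesgue (E - ball z r) * (D + r)"
proof -
  have "(\<lambda>x. x) integrable_on E"
    using E bounded_if_dist_less[OF diam] by (intro integrable_on_bounded_continuous) auto
  then have moment: "integral E (\<lambda>x. l' \<bullet> x) = 0" for l'
    using integral_linear[OF _ bounded_linear_inner_right, of "\<lambda>x. x" E l'] bary
    by (simp add: o_def)
  show ?thesis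
    using inner_center_le_measure_Diff_ball[OF E diam moment l vol small]
      inner_center_le_measure_Diff_ball[OF E diam moment _ vol small, of "-l"] l
    by (simp add: abs_if)
qed

lemma radius_le_if_measure_eq_ball:
  fixes E :: "'a::euclidean_space set" and z :: 'a
  assumes "E \<in> lmeasurable" "measure lebesgue E = measure lebesgue (ball z r)" "0 < r"
    and diam: "\<And>p q. p \<in> E \<Longrightarrow> q \<in> E \<Longrightarrow> dist p q < D"
  shows "r \<le> D"
proof -
  obtain p where "p \<in> E"
    using assms(2,3) content_ball_pos[of r z] by fastforce
  then have "0 < D" "E \<subseteq> cball p D"
    using diam[of p] by (auto dest: diam[OF \<open>p \<in> E\<close>])
  then have "unit_ball_vol DIM('a) * r ^ DIM('a) \<le> unit_ball_vol DIM('a) * D ^ DIM('a)"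
    using assms(1,2,3) measure_mono_fmeasurable[of E "cball p D" lebesgue]
    by (simp add: content_ball content_cball)
  then show ?thesis
    using \<open>0 < D\<close> \<open>0 < r\<close> by (simp add: power_mono_iff)
qed

section \<open>Lebesgue density theorem\<close>

lemma measure_Int_UN_le:
  assumes "countable I" "disjoint_family_on F I" "\<And>i. i \<in> I \<Longrightarrow> F i \<in> sets M"
    and U: "(\<Union>i\<in>I. F i) \<in> fmeasurable M" and "E \<in> sets M" "0 \<le> \<theta>"
    and dens: "\<And>i. i \<in> I \<Longrightarrow> measure M (E \<inter> F i) \<le> \<theta> * measure M (F i)"
  shows "measure M (E \<inter> (\<Union>i\<in>I. F i)) \<le> \<theta> * measure M (\<Union>i\<in>I. F i)"
proof -
  have fin: "X \<in> fmeasurable M" if "X \<subseteq> (\<Union>i\<in>I. F i)" "X \<in> sets M" for X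
    using fmeasurableI2[OF U that] .
  have "emeasure M (E \<inter> (\<Union>i\<in>I. F i)) = emeasure M (\<Union>i\<in>I. E \<inter> F i)"
    by (simp only: Int_UN_distrib)
  also have "\<dots> = (\<integral>\<^sup>+i. emeasure M (E \<inter> F i) \<partial>count_space I)"
    using assms(1-3,5) by (intro emeasure_UN_countable) (auto simp: disjoint_family_on_def)
  also have "\<dots> \<le> (\<integral>\<^sup>+i. ennreal \<theta> * emeasure M (F i) \<partial>count_space I)"
  proof (intro nn_integral_mono)
    fix i
    assume "i \<in> space (count_space I)"
    then have "F i \<in> fmeasurable M" "E \<inter> F i \<in> fmeasurable M"
      using assms(3,5) by (auto intro!: fin)
    then show "emeasure M (E \<inter> F i) \<le> ennreal \<theta> * emeasure M (F i)"
      using dens \<open>i \<in> space _\<close> \<open>0 \<le> \<theta>\<close>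
      by (simp add: emeasure_eq_measure2 ennreal_mult[symmetric] ennreal_leI)
  qed
  also have "\<dots> = ennreal \<theta> * emeasure M (\<Union>i\<in>I. F i)"
    using assms(1-3) by (simp add: nn_integral_cmult emeasure_UN_countable)
  finally have "ennreal (measure M (E \<inter> (\<Union>i\<in>I. F i)))
                \<le> ennreal \<theta> * ennreal (measure M (\<Union>i\<in>I. F i))"
    using fin[OF Int_lower2 sets.Int[OF assms(5) fmeasurableD[OF U]]]
    by (simp only: emeasure_eq_measure2 U)
  then show ?thesis
    using \<open>0 \<le> \<theta>\<close> by (simp add: ennreal_mult'[symmetric])
qed

lemma Vitali_covering_open_balls:
  fixes S U :: "'a::euclidean_space set"
  assumes "open U" "S \<subseteq> U"
    and small: "\<And>x d. x \<in> S \<Longrightarrow> 0 < d \<Longrightarrow> \<exists>\<rho>. 0 < \<rho> \<and> \<rho> < d \<and> P x \<rho>"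
  obtains C where "countable C"
    "\<And>i. i \<in> C \<Longrightarrow> 0 < snd i \<and> ball (fst i) (snd i) \<subseteq> U \<and> P (fst i) (snd i)"
    "disjoint_family_on (\<lambda>i. ball (fst i) (snd i)) C"
    "negligible (S - (\<Union>i\<in>C. ball (fst i) (snd i)))"
proof -
  let ?K = "{(x, \<rho>). 0 < \<rho> \<and> ball x \<rho> \<subseteq> U \<and> P x \<rho>}"
  have "\<exists>i. i \<in> ?K \<and> x \<in> ball (fst i) (snd i) \<and> snd i < d" if "x \<in> S" "0 < d" for x d
  proof -
    obtain \<delta> where "0 < \<delta>" "ball x \<delta> \<subseteq> U"
      using assms(1,2) \<open>x \<in> S\<close> open_contains_ball by blast
    moreover obtain \<rho> where "0 < \<rho>" "\<rho> < min d \<delta>" "P x \<rho>"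
      using small[OF \<open>x \<in> S\<close>, of "min d \<delta>"] \<open>0 < d\<close> \<open>0 < \<delta>\<close> by auto
    ultimately show ?thesis
      by (intro exI[of _ "(x, \<rho>)"]) auto
  qed
  then obtain C where "countable C" "C \<subseteq> ?K"
    and "pairwise (\<lambda>i j. disjnt (ball (fst i) (snd i)) (ball (fst j) (snd j))) C"
    and "negligible (S - (\<Union>i\<in>C. ball (fst i) (snd i)))"
    by (rule Vitali_covering_theorem_balls[of S ?K fst snd]) blast
  then show ?thesis
    by (intro that) (force simp: disjoint_family_on_def pairwise_def disjnt_def)+
qed

lemma low_density_ball_cover:
  fixes E S U :: "'a::euclidean_space set"
  assumes E: "E \<in> lmeasurable" and U: "U \<in> lmeasurable" "open U" and "S \<subseteq> U" "0 \<le> \<theta>"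
    and low: "\<And>x d. x \<in> S \<Longrightarrow> 0 < d \<Longrightarrow>
      \<exists>\<rho>. 0 < \<rho> \<and> \<rho> < d \<and> measure lebesgue (E \<inter> ball x \<rho>) < \<theta> * measure lebesgue (ball x \<rho>)"
  obtains T where "T \<subseteq> U" "T \<in> lmeasurable" "negligible (S - T)"
    "measure lebesgue (E \<inter> T) \<le> \<theta> * measure lebesgue T"
proof -
  obtain C where C: "countable C"
    "\<And>i. i \<in> C \<Longrightarrow> 0 < snd i \<and> ball (fst i) (snd i) \<subseteq> U \<and>
       measure lebesgue (E \<inter> ball (fst i) (snd i)) < \<theta> * measure lebesgue (ball (fst i) (snd i))"
    "disjoint_family_on (\<lambda>i. ball (fst i) (snd i)) C"
    "negligible (S - (\<Union>i\<in>C. ball (fst i) (snd i)))"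
    by (rule Vitali_covering_open_balls[OF \<open>open U\<close> \<open>S \<subseteq> U\<close> low]) auto
  define T where "T = (\<Union>i\<in>C. ball (fst i) (snd i))"
  have "T \<subseteq> U"
    using C(2) by (auto simp: T_def)
  moreover have "T \<in> lmeasurable"
    unfolding T_def using \<open>T \<subseteq> U\<close> C(1)
    by (intro fmeasurableI2[OF U(1)] sets.countable_UN') (auto simp: T_def)
  moreover have "measure lebesgue (E \<inter> T) \<le> \<theta> * measure lebesgue T"
    unfolding T_def using C \<open>T \<in> lmeasurable\<close> \<open>0 \<le> \<theta>\<close> E
    by (intro measure_Int_UN_le) (auto simp: T_def less_imp_le)
  ultimately show ?thesis
    using C(4) that by (simp add: T_def)
qed

lemma negligible_low_density:
  fixes E :: "'a::euclidean_space set"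
  assumes E: "E \<in> lmeasurable" and "0 \<le> \<theta>" "\<theta> < 1"
  shows "negligible {x\<in>E. \<not> (\<forall>\<^sub>F \<rho> in at_right 0.
           \<theta> * measure lebesgue (ball x \<rho>) \<le> measure lebesgue (E \<inter> ball x \<rho>))}"
    (is "negligible ?S")
  unfolding negligible_outer_le
proof (intro allI impI)
  \<comment> \<open>Disjoint balls of density below \<theta> inside an open U \<supseteq> E lose the fraction 1 - \<theta>
    of their volume to U - E, so their union is small if U - E is.\<close>
  fix e :: real
  assume "e > 0"
  then obtain U where U: "open U" "E \<subseteq> U" "U - E \<in> lmeasurable"
    and "emeasure lebesgue (U - E) < ennreal (e * (1 - \<theta>))"
    using sets_lebesgue_outer_open[of E "e * (1 - \<theta>)"] E \<open>\<theta> < 1\<close> by auto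
  then have UE: "measure lebesgue (U - E) < e * (1 - \<theta>)"
    by (simp add: emeasure_eq_measure2 ennreal_less_iff)
  have "U = E \<union> (U - E)"
    using U by blast
  then have "U \<in> lmeasurable"
    using E U(3) by (metis fmeasurable.Un)
  moreover have "?S \<subseteq> U"
    using U(2) by blast
  moreover have "\<exists>\<rho>. 0 < \<rho> \<and> \<rho> < d \<and>
      measure lebesgue (E \<inter> ball x \<rho>) < \<theta> * measure lebesgue (ball x \<rho>)" if "x \<in> ?S" "0 < d" for x d
    using that by (auto simp: eventually_at_right_field not_le)
  ultimately obtain T where T: "T \<subseteq> U" "T \<in> lmeasurable" "negligible (?S - T)"
    and dens: "measure lebesgue (E \<inter> T) \<le> \<theta> * measure lebesgue T"
    using low_density_ball_cover[OF E _ \<open>open U\<close> _ \<open>0 \<le> \<theta>\<close>] by blast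
  have "measure lebesgue (T - E) = measure lebesgue T - measure lebesgue (E \<inter> T)"
  proof -
    have "T - E = T - (E \<inter> T)"
      by blast
    then show ?thesis
      using T E by (simp add: measurable_measure_Diff fmeasurableD sets.Int)
  qed
  moreover have "measure lebesgue (T - E) \<le> measure lebesgue (U - E)"
    using T E U(3) by (intro measure_mono_fmeasurable) auto
  moreover have "(1 - \<theta>) * measure lebesgue T = measure lebesgue T - \<theta> * measure lebesgue T"
    by (simp add: algebra_simps)
  ultimately have "(1 - \<theta>) * measure lebesgue T < e * (1 - \<theta>)"
    using UE dens by linarith
  then have "measure lebesgue T \<le> e"
    using \<open>\<theta> < 1\<close> by (simp add: mult.commute[of e])
  moreover have "measure lebesgue ((?S - T) \<union> T) \<le> measure lebesgue (?S - T) + measure lebesgue T"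
    using T by (intro measure_Un_le) (auto simp: negligible_imp_sets)
  moreover have "measure lebesgue (?S - T) = 0"
    using T(3) by (rule negligible_imp_measure0)
  moreover have "(?S - T) \<union> T \<in> lmeasurable"
    by (rule fmeasurable.Un[OF negligible_imp_measurable[OF T(3)] T(2)])
  ultimately show "\<exists>T'. ?S \<subseteq> T' \<and> T' \<in> lmeasurable \<and> measure lebesgue T' \<le> e"
    by (intro exI[of _ "(?S - T) \<union> T"]) auto
qed

lemma negligible_not_density_point:
  fixes E :: "'a::euclidean_space set"
  assumes E: "E \<in> lmeasurable"
  shows "negligible {x\<in>E. \<not> ((\<lambda>\<rho>. measure lebesgue (E \<inter> ball x \<rho>) / measure lebesgue (ball x \<rho>))
                                 \<longlongrightarrow> 1) (at_right 0)}"
proof -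
  define low where "low n = {x\<in>E. \<not> (\<forall>\<^sub>F \<rho> in at_right 0.
    (1 - 1 / Suc n) * measure lebesgue (ball x \<rho>) \<le> measure lebesgue (E \<inter> ball x \<rho>))}" for n :: nat
  have "negligible (\<Union>n. low n)"
    unfolding low_def using E by (intro negligible_Union_nat negligible_low_density) auto
  moreover have "((\<lambda>\<rho>. measure lebesgue (E \<inter> ball x \<rho>) / measure lebesgue (ball x \<rho>)) \<longlongrightarrow> 1)
                   (at_right 0)" if "x \<in> E" "x \<notin> (\<Union>n. low n)" for x
  proof (rule tendstoI)
    fix \<epsilon> :: real
    assume "\<epsilon> > 0"
    then obtain n where n: "1 / Suc n < \<epsilon>"
      using nat_approx_posE by blast
    have "\<forall>\<^sub>F \<rho> in at_right 0.
            (1 - 1 / Suc n) * measure lebesgue (ball x \<rho>) \<le> measure lebesgue (E \<inter> ball x \<rho>)"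
      using that by (auto simp: low_def)
    then show "\<forall>\<^sub>F \<rho> in at_right 0.
        dist (measure lebesgue (E \<inter> ball x \<rho>) / measure lebesgue (ball x \<rho>)) 1 < \<epsilon>"
      using eventually_at_right_less
    proof eventually_elim
      case (elim \<rho>)
      have pos: "0 < measure lebesgue (ball x \<rho>)"
        using elim(2) by (simp add: content_ball_pos)
      have "measure lebesgue (E \<inter> ball x \<rho>) \<le> measure lebesgue (ball x \<rho>)"
        using E by (intro measure_mono_fmeasurable) auto
      then have "measure lebesgue (E \<inter> ball x \<rho>) / measure lebesgue (ball x \<rho>) \<le> 1"
        using pos by simp
      moreover have "1 - 1 / Suc n \<le> measure lebesgue (E \<inter> ball x \<rho>) / measure lebesgue (ball x \<rho>)"
        using elim(1) pos by (simp add: le_divide_eq)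
      ultimately show ?case
        using n by (simp add: dist_real_def)
    qed
  qed
  ultimately show ?thesis
    by (elim negligible_subset) blast
qed

section \<open>Deviation of the half mass\<close>

lemma measure_symdiff_eq_if_measure_eq:
  assumes "A \<in> fmeasurable M" "B \<in> fmeasurable M" "measure M A = measure M B"
  shows "measure M ((A - B) \<union> (B - A)) = 2 * measure M (A - B)"
proof -
  have "(A - B) \<inter> (B - A) = {}"
    by blast
  then show ?thesis
    using measure_Un3[of "A - B" M "B - A"] measure_Diff_eq_if_measure_eq[OF assms] assms(1,2)
    by auto
qed

lemma half_mass_deviation_arith:
  fixes a c r D :: real
  assumes "0 \<le> a" "0 \<le> c" "0 < r" "r \<le> D"
  shows "a + c * a * (D + r) \<le> (c + 1 / (2 * r)) * D * (2 * a)"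
proof -
  have "a \<le> a * D / r" "c * a * r \<le> c * a * D"
    using assms by (simp_all add: le_divide_eq mult_left_mono)
  moreover have "(c + 1 / (2 * r)) * D * (2 * a) = c * a * D + c * a * D + a * D / r"
    using assms by (simp add: field_simps)
  moreover have "c * a * (D + r) = c * a * D + c * a * r"
    by (simp add: algebra_simps)
  ultimately show ?thesis
    by linarith
qed

lemma half_mass_deviation_le_symdiff:
  fixes E :: "'a::euclidean_space set" and e z :: 'a
  assumes E: "E \<in> lmeasurable" "measure lebesgue E = 1"
    and diam: "\<And>p q. p \<in> E \<Longrightarrow> q \<in> E \<Longrightarrow> dist p q < D"
    and bary: "integral E (\<lambda>x. x) = 0"
    and e: "e \<in> Basis" and r: "0 < r" and B: "measure lebesgue (ball z r) = 1"
  shows "\<bar>1/2 - measure lebesgue (E \<inter> {x. 0 < e \<bullet> x})\<bar>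
           \<le> (unit_ball_vol (real (DIM('a) - 1)) * r ^ (DIM('a) - 1) + 1 / (2 * r)) * D
             * measure lebesgue ((E - ball z r) \<union> (ball z r - E))"
proof -
  define c where "c = unit_ball_vol (real (DIM('a) - 1)) * r ^ (DIM('a) - 1)"
  define a where "a = measure lebesgue (E - ball z r)"
  define H where "H = {x::'a. 0 < e \<bullet> x}"
  have H: "H \<in> sets lebesgue"
    by (simp add: H_def)
  have "r \<le> D"
    using E diam r B by (intro radius_le_if_measure_eq_ball[of E z r]) auto
  have "0 \<le> c" "0 \<le> a"
    using r by (simp_all add: c_def a_def)
  have symdiff: "measure lebesgue ((E - ball z r) \<union> (ball z r - E)) = 2 * a"
    using measure_symdiff_eq_if_measure_eq[OF E(1) lmeasurable_ball] E B by (simp add: a_def)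
  have bound: "a + c * a * (D + r) \<le> (c + 1 / (2 * r)) * D * (2 * a)"
    using half_mass_deviation_arith \<open>0 \<le> a\<close> \<open>0 \<le> c\<close> r \<open>r \<le> D\<close> .
  have "\<bar>1/2 - measure lebesgue (E \<inter> H)\<bar> \<le> (c + 1 / (2 * r)) * D * (2 * a)"
  proof (cases "1/2 \<le> a")
    case True
    have "0 \<le> measure lebesgue (E \<inter> H)" "measure lebesgue (E \<inter> H) \<le> 1"
      using E H measure_mono_fmeasurable[of "E \<inter> H" E lebesgue] by auto
    moreover have "0 \<le> c * a * (D + r)"
      using \<open>0 \<le> a\<close> \<open>0 \<le> c\<close> \<open>r \<le> D\<close> r by simp
    ultimately show ?thesis
      using True bound unfolding abs_le_iff by linarith
  next
    case False
    have center: "\<bar>z \<bullet> e\<bar> \<le> a * (D + r)"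
      using abs_inner_center_le_measure_Diff_ball[OF E(1) diam bary, of e z r] E B e False
      by (simp add: a_def inner_commute)
    have "\<bar>measure lebesgue (ball z r \<inter> H) - 1/2\<bar> \<le> \<bar>z \<bullet> e\<bar> * c"
      using measure_ball_Int_halfspace_deviation[OF e r, of z] B by (simp add: H_def c_def)
    moreover have "\<bar>z \<bullet> e\<bar> * c \<le> c * a * (D + r)"
      using mult_right_mono[OF center \<open>0 \<le> c\<close>] by (simp add: mult_ac)
    moreover have "\<bar>measure lebesgue (E \<inter> H) - measure lebesgue (ball z r \<inter> H)\<bar> \<le> a"
      using abs_measure_Int_diff_le[OF E(1) lmeasurable_ball H] E B by (simp add: a_def)
    ultimately show ?thesis
      using bound by (simp add: abs_le_iff)
  qed
  then show ?thesis
    using symdiff by (simp add: H_def c_def)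
qed

lemma half_mass_deviation_le_symdiff_ae:
  fixes E N :: "'a::euclidean_space set" and e z :: 'a
  assumes E: "E \<in> lmeasurable" "measure lebesgue E = 1" and "negligible N"
    and diam: "\<And>p q. p \<in> E - N \<Longrightarrow> q \<in> E - N \<Longrightarrow> dist p q < D"
    and bary: "integral E (\<lambda>x. x) = 0"
    and e: "e \<in> Basis" and r: "0 < r" and B: "measure lebesgue (ball z r) = 1"
  shows "\<bar>1/2 - measure lebesgue (E \<inter> {x. 0 < e \<bullet> x})\<bar>
           \<le> (unit_ball_vol (real (DIM('a) - 1)) * r ^ (DIM('a) - 1) + 1 / (2 * r)) * D
             * measure lebesgue ((E - ball z r) \<union> (ball z r - E))"
proof -
  let ?H = "{x::'a. 0 < e \<bullet> x}"
  have null: "negligible X" if "X \<subseteq> N" for X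
    using \<open>negligible N\<close> that by (rule negligible_subset)
  have "negligible ((E - (E - N)) \<union> ((E - N) - E))"
    by (rule null) auto
  then have E': "E - N \<in> lmeasurable" "measure lebesgue (E - N) = 1"
    using lmeasurable_negligible_symdiff[OF E(1)] measure_negligible_symdiff[OF E(1)] E(2) by auto
  have "integral (E - N) (\<lambda>x. x) = integral E (\<lambda>x. x)"
    by (intro integral_spike_set null) auto
  then have "\<bar>1/2 - measure lebesgue ((E - N) \<inter> ?H)\<bar>
      \<le> (unit_ball_vol (real (DIM('a) - 1)) * r ^ (DIM('a) - 1) + 1 / (2 * r)) * D
        * measure lebesgue ((E - N - ball z r) \<union> (ball z r - (E - N)))"
    using half_mass_deviation_le_symdiff[OF E' diam _ e r B] bary by simp
  moreover have "measure lebesgue (E \<inter> ?H) = measure lebesgue ((E - N) \<inter> ?H)"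
    using fmeasurable_Int_fmeasurable[OF E'(1), of ?H]
    by (intro measure_negligible_symdiff null) auto
  moreover have "(E - N - ball z r) \<union> (ball z r - (E - N)) \<in> lmeasurable"
    using E'(1) by (intro fmeasurable.Un) auto
  then have "measure lebesgue ((E - ball z r) \<union> (ball z r - E))
             = measure lebesgue ((E - N - ball z r) \<union> (ball z r - (E - N)))"
    by (rule measure_negligible_symdiff[OF _ null]) auto
  ultimately show ?thesis
    by simp
qed

lemma negligible_not_lebesgue_point:
  "E \<in> lmeasurable \<Longrightarrow> negligible {x\<in>E. \<not> lebesgue_point E x}"
  using negligible_not_density_point by (simp add: lebesgue_point_def)

lemma dist_less_if_mt_diam_less:
  assumes "mt_diam E < ereal D" "lebesgue_point E p" "lebesgue_point E q"
  shows "dist p q < D"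
proof -
  have "ereal (dist p q) \<le> mt_diam E"
    unfolding mt_diam_def using assms(2,3) by (intro SUP_upper2[of "(p, q)"]) auto
  then have "ereal (dist p q) < ereal D"
    using assms(1) by (rule le_less_trans)
  then show ?thesis
    by simp
qed

lemma unit_volume_ball_radius:
  fixes z :: "'a::euclidean_space"
  defines "r \<equiv> (1 / unit_ball_vol DIM('a)) powr (1 / DIM('a))"
  shows "0 < r" "measure lebesgue (ball z r) = 1"
    and "unit_ball_vol (real (DIM('a) - 1)) * r ^ (DIM('a) - 1) + 1 / (2 * r)
         = unit_ball_vol (real DIM('a) - 1)
             / unit_ball_vol DIM('a) powr ((real DIM('a) - 1) / DIM('a))
           + unit_ball_vol DIM('a) powr (1 / DIM('a)) / 2"
proof -
  let ?\<omega> = "unit_ball_vol DIM('a)"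
  have "0 < ?\<omega>"
    by simp
  then have "?\<omega> \<noteq> 0"
    by linarith
  show "0 < r"
    using \<open>?\<omega> \<noteq> 0\<close> by (simp add: r_def)
  have "r ^ n = (1 / ?\<omega>) powr (n / DIM('a))" for n
  proof -
    have "r ^ n = r powr n"
      using \<open>0 < r\<close> by (simp add: powr_realpow)
    then show ?thesis
      by (simp add: r_def powr_powr)
  qed
  from this[of "DIM('a)"] this[of "DIM('a) - 1"] \<open>0 < ?\<omega>\<close>
  show "measure lebesgue (ball z r) = 1"
    and "unit_ball_vol (real (DIM('a) - 1)) * r ^ (DIM('a) - 1) + 1 / (2 * r)
         = unit_ball_vol (real DIM('a) - 1) / ?\<omega> powr ((real DIM('a) - 1) / DIM('a))
           + ?\<omega> powr (1 / DIM('a)) / 2"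
    using \<open>0 < r\<close> by (simp_all add: content_ball r_def powr_divide of_nat_diff)
qed

lemma half_mass_deviation_le_fraenkel:
  fixes E :: "(real^'n::{finite,linorder}) set" and i :: 'n
  assumes E: "E \<in> lmeasurable" "measure lebesgue E = 1"
    and "barycenter E = 0" "mt_diam E < ereal D" "0 < D"
  shows "\<bar>1/2 - measure lebesgue (E \<inter> {x. 0 < x $ i})\<bar>
           \<le> (unit_ball_vol (real CARD('n) - 1)
                / unit_ball_vol (real CARD('n)) powr ((real CARD('n) - 1) / real CARD('n))
              + unit_ball_vol (real CARD('n)) powr (1 / real CARD('n)) / 2) * D * fraenkel E"
proof -
  define r :: real where "r = (1 / unit_ball_vol CARD('n)) powr (1 / CARD('n))"
  define K
    where "K = (unit_ball_vol (real (CARD('n) - 1)) * r ^ (CARD('n) - 1) + 1 / (2 * r)) * D"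
  let ?\<epsilon> = "\<bar>1/2 - measure lebesgue (E \<inter> {x. 0 < axis i 1 \<bullet> x})\<bar>"
  have r: "0 < r" "\<And>z::(real, 'n) vec. measure lebesgue (ball z r) = 1"
    and K: "K = (unit_ball_vol (real CARD('n) - 1)
                  / unit_ball_vol (real CARD('n)) powr ((real CARD('n) - 1) / real CARD('n))
                + unit_ball_vol (real CARD('n)) powr (1 / real CARD('n)) / 2) * D"
    using unit_volume_ball_radius[where 'a="(real, 'n) vec"] by (simp_all add: r_def K_def)
  have "0 < K"
    unfolding K_def using r \<open>0 < D\<close>
    by (intro mult_pos_pos add_nonneg_pos mult_nonneg_nonneg unit_ball_vol_nonneg) auto
  let ?N = "{x\<in>E. \<not> lebesgue_point E x}"
  have "dist p q < D" if "p \<in> E - ?N" "q \<in> E - ?N" for p q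
    using that assms(4) by (auto intro: dist_less_if_mt_diam_less)
  moreover have "integral E (\<lambda>x. x) = 0"
    using assms(2,3) by (simp add: barycenter_def)
  ultimately have "?\<epsilon> \<le> K * measure lebesgue ((E - ball z r) \<union> (ball z r - E))" for z
    using half_mass_deviation_le_symdiff_ae[OF E negligible_not_lebesgue_point[OF E(1)]] r
    by (simp add: K_def)
  moreover have "fraenkel E = (INF z. measure lebesgue ((E - ball z r) \<union> (ball z r - E)))"
    by (simp add: fraenkel_def E(2) vol_ball_def r_def)
  ultimately have "?\<epsilon> / K \<le> fraenkel E"
    using \<open>0 < K\<close> by (simp add: cINF_greatest pos_divide_le_eq mult.commute)
  then show ?thesis
    using \<open>0 < K\<close> by (simp add: pos_divide_le_eq K inner_axis' mult.commute)
qed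

theorem lemma2p2:
  fixes E :: "(real^('n::{finite,linorder})) set"
    and k :: nat and D CF :: real and i1 :: "'n::{finite,linorder}"
  assumes N2: "CARD('n) \<ge> 2"
    and k: "1 \<le> k" "k \<le> CARD('n)"
    and D: "D > 0"
    and CF: "\<forall>F::(real^('n::{finite,linorder})) set. finite_perimeter F \<and> emeasure lebesgue F < \<infinity>
               \<and> 0 < measure lebesgue F \<longrightarrow> fraenkel F \<le> CF * sqrt (deficit F)"
    and Efp: "finite_perimeter E"
    and Evol: "measure lebesgue E = 1"
    and Ebar: "barycenter E = 0"
    and Ediam: "mt_diam E < ereal D"
    and Esym: "\<forall>i. CARD('n) - k + 1 < coord_pos i \<longrightarrow> reflect_coord i ` E = E"
    and i1: "coord_pos i1 = 1"
  shows "\<bar>1/2 - measure lebesgue (E \<inter> {x. x $ i1 > 0})\<bar>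
           \<le> CF * (unit_ball_vol (real CARD('n) - 1)
                      / unit_ball_vol (real CARD('n)) powr ((real CARD('n) - 1) / real CARD('n))
                    + unit_ball_vol (real CARD('n)) powr (1 / real CARD('n)) / 2)
             * D * sqrt (deficit E)"
proof -
  let ?C = "unit_ball_vol (real CARD('n) - 1)
              / unit_ball_vol (real CARD('n)) powr ((real CARD('n) - 1) / real CARD('n))
            + unit_ball_vol (real CARD('n)) powr (1 / real CARD('n)) / 2"
  have E: "E \<in> lmeasurable"
    using Efp Evol
    by (intro fmeasurableI) (auto simp: finite_perimeter_def measure_def less_top[symmetric])
  then have "fraenkel E \<le> CF * sqrt (deficit E)"
    using CF Efp Evol by (auto simp: fmeasurable_def)
  moreover have "0 \<le> ?C * D"
    using N2 D by simp
  ultimately have "?C * D * fraenkel E \<le> ?C * D * (CF * sqrt (deficit E))"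
    by (rule mult_left_mono)
  moreover have "\<bar>1/2 - measure lebesgue (E \<inter> {x. x $ i1 > 0})\<bar> \<le> ?C * D * fraenkel E"
    using half_mass_deviation_le_fraenkel[OF E Evol Ebar Ediam D] .
  ultimately show ?thesis
    by (simp add: mult_ac)
qed

end
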